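(* Let $S$ be a topological semigroup and $e\in S$ a balanced open right unit of $S$. Then $S$ has open left shifts and open right shifts. If moreover $S$ is a $T_1$-space, then $e$ is an open left unit of $S$ (in particular $e$ is a unit and $S$ is a balanced topological monoid).
   Context: A topological semigroup is a topological space with a continuous associative multiplication. $e$ is a right unit if $xe=x$ for all $x\in S$, a left unit if $ex=x$ for all $x$, a unit if both. A right unit $e$ is an open right unit if $xU$ is a neighborhood of $x$ for every neighborhood $U$ of $e$ and every $x\in S$; a left unit is an open left unit if $Ux$ is a neighborhood of $x$ for every such $U$ and $x$. A subset $U\subset S$ is invariant if $xU=Ux$ for all $x\in S$. A point $e$ is balanced if it has a neighborhood base consisting of open invariant neighborhoods; a balanced open right unit is an open right unit which is a balanced point. A topological monoid (semigroup with unit) is balanced if its unit is a balanced point. $S$ has open left (right) shifts if $x\mapsto ax$ (resp. $x\mapsto xa$) is an open map for every $a\in S$. *)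

theory Defs
  imports Complex_Main
begin

definition topological_semigroup :: "'a::{topological_space, semigroup_mult} itself \<Rightarrow> bool" where
  "topological_semigroup _ \<longleftrightarrow> continuous_on (UNIV :: ('a \<times> 'a) set) (\<lambda>p. fst p * snd p)"

definition nhd :: "'a::topological_space set \<Rightarrow> 'a \<Rightarrow> bool" where
  "nhd U x \<longleftrightarrow> (\<exists>V. open V \<and> x \<in> V \<and> V \<subseteq> U)"

definition right_unit :: "'a::semigroup_mult \<Rightarrow> bool" where
  "right_unit e \<longleftrightarrow> (\<forall>x. x * e = x)"

definition left_unit :: "'a::semigroup_mult \<Rightarrow> bool" where
  "left_unit e \<longleftrightarrow> (\<forall>x. e * x = x)"

definition is_unit :: "'a::semigroup_mult \<Rightarrow> bool" where
  "is_unit e \<longleftrightarrow> left_unit e \<and> right_unit e"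

definition open_right_unit :: "'a::{topological_space, semigroup_mult} \<Rightarrow> bool" where
  "open_right_unit e \<longleftrightarrow> right_unit e \<and>
     (\<forall>U x. nhd U e \<longrightarrow> nhd ((\<lambda>u. x * u) ` U) x)"

definition open_left_unit :: "'a::{topological_space, semigroup_mult} \<Rightarrow> bool" where
  "open_left_unit e \<longleftrightarrow> left_unit e \<and>
     (\<forall>U x. nhd U e \<longrightarrow> nhd ((\<lambda>u. u * x) ` U) x)"

definition invariant :: "'a::semigroup_mult set \<Rightarrow> bool" where
  "invariant U \<longleftrightarrow> (\<forall>x. (\<lambda>u. x * u) ` U = (\<lambda>u. u * x) ` U)"

definition balanced_point :: "'a::{topological_space, semigroup_mult} \<Rightarrow> bool" where
  "balanced_point e \<longleftrightarrow>
     (\<forall>W. nhd W e \<longrightarrow> (\<exists>U. open U \<and> e \<in> U \<and> invariant U \<and> U \<subseteq> W))"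

definition open_left_shifts :: "'a::{topological_space, semigroup_mult} itself \<Rightarrow> bool" where
  "open_left_shifts _ \<longleftrightarrow> (\<forall>(a::'a) U. open U \<longrightarrow> open ((\<lambda>x. a * x) ` U))"

definition open_right_shifts :: "'a::{topological_space, semigroup_mult} itself \<Rightarrow> bool" where
  "open_right_shifts _ \<longleftrightarrow> (\<forall>(a::'a) U. open U \<longrightarrow> open ((\<lambda>x. x * a) ` U))"

end

theory Submission
  imports Defs
begin

text \<open>Given an open set \<open>U \<ni> u\<close>, continuity of \<open>t \<mapsto> u t\<close> at the right unit \<open>e\<close> and
balancedness of \<open>e\<close> yield an open invariant \<open>V \<ni> e\<close> with \<open>uV \<subseteq> U\<close>. Since \<open>e\<close> is an
open right unit, \<open>yV\<close> is a neighbourhood of \<open>y\<close>, so it suffices to fit, for each point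
\<open>y\<close> of a shifted set, some \<open>yV\<close> inside it. For \<open>aU\<close> take \<open>y = au\<close>: \<open>auV \<subseteq> aU\<close>. For
\<open>Ua\<close> take \<open>y = ua\<close>: invariance gives \<open>uaV = uVa \<subseteq> Ua\<close>. In a \<open>T\<^sub>1\<close>-space, if
\<open>ex \<noteq> x\<close>, an open \<open>U \<ni> x\<close> missing \<open>ex\<close> yields such a \<open>V\<close> with
\<open>ex \<in> Vx = xV \<subseteq> U\<close>, a contradiction; and \<open>Ux \<supseteq> Vx = xV\<close> shows that \<open>e\<close> is an open
left unit.\<close>

lemma nhd_mono: "nhd A x \<Longrightarrow> A \<subseteq> B \<Longrightarrow> nhd B x"
  unfolding nhd_def by blast

lemma open_imp_nhd: "open U \<Longrightarrow> x \<in> U \<Longrightarrow> nhd U x"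
  unfolding nhd_def by blast

lemma open_if_nhd_of_all_points: "(\<And>y. y \<in> U \<Longrightarrow> nhd U y) \<Longrightarrow> open U"
  unfolding nhd_def by (metis open_subopen)

lemma invariantD: "invariant V \<Longrightarrow> (\<lambda>u. x * u) ` V = (\<lambda>u. u * x) ` V"
  unfolding invariant_def by blast

lemma continuous_on_mult_left:
  assumes "topological_semigroup TYPE('a::{topological_space, semigroup_mult})"
  shows "continuous_on UNIV (\<lambda>t::'a. x * t)"
proof -
  have "continuous_on UNIV ((\<lambda>p::'a \<times> 'a. fst p * snd p) \<circ> (\<lambda>t. (x, t)))"
  proof (rule continuous_on_compose)
    show "continuous_on UNIV (\<lambda>t::'a. (x, t))"
      by (intro continuous_on_Pair continuous_on_const continuous_on_id)
    show "continuous_on ((\<lambda>t. (x, t)) ` UNIV) (\<lambda>p::'a \<times> 'a. fst p * snd p)"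
      using assms unfolding topological_semigroup_def by (rule continuous_on_subset) simp
  qed
  then show ?thesis by (simp add: o_def)
qed

lemma open_if_right_translates_inside:
  fixes e :: "'a::{topological_space, semigroup_mult}"
  assumes "open_right_unit e"
    and "\<And>y. y \<in> U \<Longrightarrow> \<exists>V. open V \<and> e \<in> V \<and> (\<lambda>t. y * t) ` V \<subseteq> U"
  shows "open U"
proof (rule open_if_nhd_of_all_points)
  fix y assume "y \<in> U"
  then obtain V where V: "open V" "e \<in> V" "(\<lambda>t. y * t) ` V \<subseteq> U"
    using assms(2) by blast
  have "nhd ((\<lambda>t. y * t) ` V) y"
    using assms(1) open_imp_nhd[OF V(1,2)] unfolding open_right_unit_def by blast
  then show "nhd U y" using V(3) nhd_mono by blast
qed

lemma balanced_right_unit_shift_into_open: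
  fixes e :: "'a::{topological_space, semigroup_mult}"
  assumes "topological_semigroup TYPE('a)" "right_unit e" "balanced_point e"
    and "open U" "u \<in> U"
  obtains V where "open V" "e \<in> V" "invariant V" "(\<lambda>t. u * t) ` V \<subseteq> U"
proof -
  have "open ((\<lambda>t. u * t) -` U)"
    using open_vimage[OF assms(4) continuous_on_mult_left[OF assms(1)]] .
  moreover have "e \<in> (\<lambda>t. u * t) -` U"
    using assms(2,5) by (simp add: right_unit_def)
  ultimately obtain V where "open V" "e \<in> V" "invariant V" "V \<subseteq> (\<lambda>t. u * t) -` U"
    using assms(3) open_imp_nhd unfolding balanced_point_def by blast
  then show ?thesis using that by blast
qed

locale balanced_open_right_unit =
  fixes e :: "'a::{topological_space, semigroup_mult}"
  assumes top_semigroup: "topological_semigroup TYPE('a)"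
    and open_right_unit: "open_right_unit e"
    and balanced: "balanced_point e"
begin

lemma right_unit: "right_unit e"
  using open_right_unit unfolding open_right_unit_def by blast

lemmas shift_into_open =
  balanced_right_unit_shift_into_open[OF top_semigroup right_unit balanced]

lemma open_left_shifts: "open_left_shifts TYPE('a)"
  unfolding open_left_shifts_def
proof (intro allI impI)
  fix a :: 'a and U :: "'a set" assume "open U"
  show "open ((\<lambda>x. a * x) ` U)"
  proof (rule open_if_right_translates_inside[OF open_right_unit])
    fix y assume "y \<in> (\<lambda>x. a * x) ` U"
    then obtain u where u: "u \<in> U" "y = a * u" by blast
    obtain V where "open V" "e \<in> V" "(\<lambda>t. u * t) ` V \<subseteq> U"
      using shift_into_open[OF \<open>open U\<close> u(1)] by blast
    then show "\<exists>V. open V \<and> e \<in> V \<and> (\<lambda>t. y * t) ` V \<subseteq> (\<lambda>x. a * x) ` U"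
      using u(2) by (auto simp: mult.assoc)
  qed
qed

lemma open_right_shifts: "open_right_shifts TYPE('a)"
  unfolding open_right_shifts_def
proof (intro allI impI)
  fix a :: 'a and U :: "'a set" assume "open U"
  show "open ((\<lambda>x. x * a) ` U)"
  proof (rule open_if_right_translates_inside[OF open_right_unit])
    fix y assume "y \<in> (\<lambda>x. x * a) ` U"
    then obtain u where u: "u \<in> U" "y = u * a" by blast
    obtain V where V: "open V" "e \<in> V" "invariant V" "(\<lambda>t. u * t) ` V \<subseteq> U"
      using shift_into_open[OF \<open>open U\<close> u(1)] by blast
    have "(\<lambda>t. y * t) ` V = (\<lambda>t. u * t) ` ((\<lambda>t. a * t) ` V)"
      using u(2) by (auto simp: image_image mult.assoc)
    also have "\<dots> = (\<lambda>t. u * t) ` ((\<lambda>t. t * a) ` V)"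
      using invariantD[OF V(3)] by simp
    also have "\<dots> = (\<lambda>x. x * a) ` ((\<lambda>t. u * t) ` V)"
      by (auto simp: image_image mult.assoc)
    also have "\<dots> \<subseteq> (\<lambda>x. x * a) ` U"
      using V(4) by (rule image_mono)
    finally show "\<exists>V. open V \<and> e \<in> V \<and> (\<lambda>t. y * t) ` V \<subseteq> (\<lambda>x. x * a) ` U"
      using V(1,2) by blast
  qed
qed

lemma left_unit_if_T1:
  assumes T1: "\<forall>x y::'a. x \<noteq> y \<longrightarrow> (\<exists>U. open U \<and> x \<in> U \<and> y \<notin> U)"
  shows "left_unit e"
  unfolding left_unit_def
proof (rule allI, rule ccontr)
  fix x assume "e * x \<noteq> x"
  then obtain U where U: "open U" "x \<in> U" "e * x \<notin> U" using T1 by metis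
  obtain V where V: "e \<in> V" "invariant V" "(\<lambda>t. x * t) ` V \<subseteq> U"
    using shift_into_open[OF U(1,2)] by blast
  have "e * x \<in> (\<lambda>t. t * x) ` V" using V(1) by blast
  then have "e * x \<in> (\<lambda>t. x * t) ` V" using invariantD[OF V(2)] by simp
  then show False using V(3) U(3) by blast
qed

lemma open_left_unit_if_left_unit:
  assumes "left_unit e"
  shows "open_left_unit e"
  unfolding open_left_unit_def
proof (intro conjI assms allI impI)
  fix U x assume "nhd U e"
  then obtain V where V: "open V" "e \<in> V" "invariant V" "V \<subseteq> U"
    using balanced unfolding balanced_point_def by blast
  have "nhd ((\<lambda>u. x * u) ` V) x"
    using open_right_unit open_imp_nhd[OF V(1,2)] unfolding open_right_unit_def by blast
  then have "nhd ((\<lambda>u. u * x) ` V) x" using invariantD[OF V(3)] by simp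
  then show "nhd ((\<lambda>u. u * x) ` U) x" using V(4) nhd_mono image_mono by metis
qed

end

theorem proposition5p7:
  fixes e :: "'a::{topological_space, semigroup_mult}"
  assumes "topological_semigroup TYPE('a)"
    and "open_right_unit e"
    and "balanced_point e"
  shows "open_left_shifts TYPE('a) \<and> open_right_shifts TYPE('a) \<and>
         ((\<forall>x y::'a. x \<noteq> y \<longrightarrow> (\<exists>U. open U \<and> x \<in> U \<and> y \<notin> U)) \<longrightarrow>
           open_left_unit e \<and> is_unit e)"
proof -
  interpret balanced_open_right_unit e
    using assms by unfold_locales
  show ?thesis
    using open_left_shifts open_right_shifts left_unit_if_T1 open_left_unit_if_left_unit
      right_unit unfolding is_unit_def by blast
qed

end
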